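(* Assume CH. There exists a set $A\subseteq\mathbb{R}^2$ which is a Hamel basis of $\mathbb{R}^2$ over $\mathbb{Q}$ and such that: for every strictly increasing continuous function $f:\mathbb{R}\to\mathbb{R}$ the set $\{x\in\mathbb{R}:(x,f(x))\in A\}$ is a strong Luzin set, and for every strictly decreasing locally absolutely continuous function $g:\mathbb{R}\to\mathbb{R}$ the set $\{x\in\mathbb{R}:(x,g(x))\in A\}$ is a strong Sierpiński set.
   Context: A Luzin set is $L\subseteq\mathbb{R}$ with $|L|=\mathfrak{c}$ and $L\cap M$ countable for every meager $M$; strong Luzin if moreover $L\cap B$ is uncountable for every non-meager Borel $B$. A Sierpiński set is $S\subseteq\mathbb{R}$ with $|S|=\mathfrak{c}$ and $S\cap N$ countable for every Lebesgue-null $N$; strong Sierpiński if moreover $S\cap B$ is uncountable for every Borel $B$ of positive measure. (For a locally absolutely continuous $g$, a subset of its graph is null for arc-length measure iff its projection to the $x$-axis is Lebesgue-null, so the condition says $A\cap\mathrm{graph}(g)$ is a strong Sierpiński set in the graph.) A Hamel basis of $\mathbb{R}^2$ is a basis over $\mathbb{Q}$. *)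

theory Defs
  imports "HOL-Analysis.Analysis" "HOL-Library.Equipollence"
begin

definition CH :: bool where
  "CH \<longleftrightarrow> (\<forall>X::real set. \<not> countable X \<longrightarrow> X \<approx> (UNIV::real set))"

definition nowhere_dense :: "real set \<Rightarrow> bool" where
  "nowhere_dense N \<longleftrightarrow> interior (closure N) = {}"

definition meager :: "real set \<Rightarrow> bool" where
  "meager M \<longleftrightarrow> (\<exists>F. countable F \<and> (\<forall>N\<in>F. nowhere_dense N) \<and> M \<subseteq> \<Union>F)"

definition strong_luzin :: "real set \<Rightarrow> bool" where
  "strong_luzin L \<longleftrightarrow> L \<approx> (UNIV::real set)
     \<and> (\<forall>M. meager M \<longrightarrow> countable (L \<inter> M))
     \<and> (\<forall>B \<in> sets borel. \<not> meager B \<longrightarrow> \<not> countable (L \<inter> B))"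

definition strong_sierpinski :: "real set \<Rightarrow> bool" where
  "strong_sierpinski S \<longleftrightarrow> S \<approx> (UNIV::real set)
     \<and> (\<forall>N \<in> null_sets lebesgue. countable (S \<inter> N))
     \<and> (\<forall>B \<in> sets borel. emeasure lebesgue B > 0 \<longrightarrow> \<not> countable (S \<inter> B))"

definition abs_continuous_on_interval :: "(real \<Rightarrow> real) \<Rightarrow> real \<Rightarrow> real \<Rightarrow> bool" where
  "abs_continuous_on_interval f a b \<longleftrightarrow>
     (\<forall>\<epsilon>>0. \<exists>\<delta>>0. \<forall>(n::nat) (u::nat \<Rightarrow> real) (v::nat \<Rightarrow> real).
        (\<forall>i<n. a \<le> u i \<and> u i \<le> v i \<and> v i \<le> b)
        \<and> (\<forall>i<n. \<forall>j<n. i \<noteq> j \<longrightarrow> v i \<le> u j \<or> v j \<le> u i)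
        \<and> (\<Sum>i<n. v i - u i) < \<delta>
        \<longrightarrow> (\<Sum>i<n. \<bar>f (v i) - f (u i)\<bar>) < \<epsilon>)"

definition locally_abs_continuous :: "(real \<Rightarrow> real) \<Rightarrow> bool" where
  "locally_abs_continuous f \<longleftrightarrow> (\<forall>a b. a \<le> b \<longrightarrow> abs_continuous_on_interval f a b)"

definition rat_independent :: "(real \<times> real) set \<Rightarrow> bool" where
  "rat_independent A \<longleftrightarrow> (\<forall>S (c :: real \<times> real \<Rightarrow> rat). finite S \<and> S \<subseteq> A
      \<and> (\<Sum>a\<in>S. of_rat (c a) *\<^sub>R a) = 0 \<longrightarrow> (\<forall>a\<in>S. c a = 0))"

definition rat_span :: "(real \<times> real) set \<Rightarrow> (real \<times> real) set" where
  "rat_span A = {v. \<exists>S (c :: real \<times> real \<Rightarrow> rat). finite S \<and> S \<subseteq> A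
      \<and> v = (\<Sum>a\<in>S. of_rat (c a) *\<^sub>R a)}"

definition hamel_basis :: "(real \<times> real) set \<Rightarrow> bool" where
  "hamel_basis A \<longleftrightarrow> rat_independent A \<and> rat_span A = UNIV"

end

(*
  Under CH the reals carry a well-order all of whose proper initial segments are countable, and
  there are only continuum many "tasks": an increasing continuous f with a meager set M and an open
  set U, a decreasing continuous g with a null set N and an F-sigma set K, and a vector v.  Along
  the well-order, A is built by adding finitely many rationally independent points per task: a
  point of the graph of f in U but not in M (Baire category), a point of the graph of g in K but not
  in N, and two points whose sum is v.  A new point lying on an earlier graph of f (resp. g) is
  kept out of all earlier meager (resp. null) sets; this is possible because an increasing and a
  decreasing graph meet at most once.  So graph f meets M only in points added before both f and
  M were treated, countably many, while the points put into U - M and K - N make the intersections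
  with non-meager Borel sets (via the Baire property) and with sets of positive measure (via inner
  F-sigma approximation) uncountable.
*)
theory Submission
  imports Defs
begin

unbundle cardinal_syntax

section \<open>Meager sets\<close>

lemma meager_subset: "meager M \<Longrightarrow> M' \<subseteq> M \<Longrightarrow> meager M'"
  unfolding meager_def by (meson order_trans)

lemma meager_Union:
  assumes "countable \<M>" "\<And>M. M \<in> \<M> \<Longrightarrow> meager M"
  shows "meager (\<Union>\<M>)"
proof -
  have "\<forall>M\<in>\<M>. \<exists>\<F>. countable \<F> \<and> (\<forall>N\<in>\<F>. nowhere_dense N) \<and> M \<subseteq> \<Union>\<F>"
    using assms(2) unfolding meager_def by blast
  then obtain \<F> where \<F>: "\<And>M. M \<in> \<M> \<Longrightarrow> countable (\<F> M)"
    "\<And>M N. M \<in> \<M> \<Longrightarrow> N \<in> \<F> M \<Longrightarrow> nowhere_dense N" "\<And>M. M \<in> \<M> \<Longrightarrow> M \<subseteq> \<Union>(\<F> M)"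
    by metis
  have "countable (\<Union>(\<F> ` \<M>))"
    using assms(1) \<F>(1) by (intro countable_UN)
  moreover have "\<Union>\<M> \<subseteq> \<Union>(\<Union>(\<F> ` \<M>))"
  proof
    fix x assume "x \<in> \<Union>\<M>"
    then obtain M N where "M \<in> \<M>" "N \<in> \<F> M" "x \<in> N"
      using \<F>(3) by blast
    then show "x \<in> \<Union>(\<Union>(\<F> ` \<M>))"
      by blast
  qed
  ultimately show ?thesis
    unfolding meager_def using \<F>(2) by (intro exI[of _ "\<Union>(\<F> ` \<M>)"]) auto
qed

lemma meager_Un: "meager A \<Longrightarrow> meager B \<Longrightarrow> meager (A \<union> B)"
  using meager_Union[of "{A, B}"] by auto

lemma meager_countable: "countable (C::real set) \<Longrightarrow> meager C"
  unfolding meager_def nowhere_dense_def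
  by (rule exI[of _ "(\<lambda>x. {x}) ` C"]) (auto simp: interior_singleton)

lemma open_nonempty_not_meager:
  assumes "open U" "U \<noteq> {}"
  shows "\<not> meager U"
proof
  assume "meager U"
  then obtain \<F> where \<F>: "countable \<F>" "\<forall>N\<in>\<F>. nowhere_dense N" "U \<subseteq> \<Union>\<F>"
    unfolding meager_def by blast
  have "(UNIV::real set) \<subseteq> closure (\<Inter>N\<in>\<F>. - closure N)"
  proof (rule Baire)
    fix T assume "T \<in> (\<lambda>N. - closure N) ` \<F>"
    with \<F>(2) show "openin (top_of_set UNIV) T \<and> UNIV \<subseteq> closure T"
      by (auto simp: nowhere_dense_def closure_complement)
  qed (use \<F>(1) in auto)
  then have "U \<inter> (\<Inter>N\<in>\<F>. - closure N) \<noteq> {}"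
    using assms open_Int_closure_eq_empty[of U] by auto
  with \<F>(3) closure_subset show False by blast
qed

lemma meager_subset_meager_fsigma:
  assumes "meager M"
  obtains C where "fsigma C" "meager C" "M \<subseteq> C"
proof -
  obtain \<F> where \<F>: "countable \<F>" "\<forall>N\<in>\<F>. nowhere_dense N" "M \<subseteq> \<Union>\<F>"
    using assms unfolding meager_def by blast
  define \<C> where "\<C> = closure ` insert {} \<F>"
  have "countable \<C>" "\<C> \<noteq> {}" "\<forall>C\<in>\<C>. closed C"
    using \<F>(1) by (auto simp: \<C>_def)
  then have \<C>_eq: "\<Union>\<C> = (\<Union>n. from_nat_into \<C> n)"
    by (simp add: range_from_nat_into)
  show thesis
  proof
    show "fsigma (\<Union>\<C>)"
      unfolding \<C>_eq using from_nat_into[OF \<open>\<C> \<noteq> {}\<close>] \<open>\<forall>C\<in>\<C>. closed C\<close>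
      by (intro fsigma.intros) blast
    have "\<forall>C\<in>\<C>. nowhere_dense C"
      using \<F>(2) by (auto simp: \<C>_def nowhere_dense_def)
    then show "meager (\<Union>\<C>)"
      unfolding meager_def using \<open>countable \<C>\<close> by (intro exI[of _ \<C>]) simp
    have "N \<subseteq> \<Union>\<C>" if "N \<in> \<F>" for N
    proof -
      have "closure N \<in> \<C>"
        using that by (simp add: \<C>_def)
      then show ?thesis
        using closure_subset[of N] by blast
    qed
    then have "\<Union>\<F> \<subseteq> \<Union>\<C>"
      by (rule Union_least)
    then show "M \<subseteq> \<Union>\<C>"
      using \<F>(3) by simp
  qed
qed

definition baire_property :: "real set \<Rightarrow> bool" where
  "baire_property B \<longleftrightarrow> (\<exists>U. open U \<and> meager (sym_diff B U))"

lemma baire_property_Compl: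
  assumes "baire_property B"
  shows "baire_property (- B)"
proof -
  obtain U where U: "open U" "meager (sym_diff B U)"
    using assms unfolding baire_property_def by blast
  have "interior (frontier U) = {}"
  proof -
    have "interior (frontier U) \<inter> U = {}"
      using interior_subset[of "frontier U"] \<open>open U\<close> by (auto simp: frontier_def interior_open)
    then show ?thesis
      using open_Int_closure_eq_empty[of "interior (frontier U)" U] interior_subset[of "frontier U"]
      by (auto simp: frontier_def)
  qed
  then have "nowhere_dense (frontier U)"
    by (simp add: nowhere_dense_def)
  then have "meager (frontier U)"
    unfolding meager_def by (intro exI[of _ "{frontier U}"]) auto
  moreover have "sym_diff (- B) (- closure U) \<subseteq> sym_diff B U \<union> frontier U"
    using \<open>open U\<close> closure_subset[of U] by (auto simp: frontier_def interior_open)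
  ultimately show ?thesis
    unfolding baire_property_def using U by (intro exI[of _ "- closure U"]) (auto intro: meager_subset meager_Un)
qed

lemma baire_property_UN:
  assumes "\<And>n::nat. baire_property (A n)"
  shows "baire_property (\<Union>n. A n)"
proof -
  obtain U where U: "\<And>n. open (U n)" "\<And>n. meager (sym_diff (A n) (U n))"
    using assms unfolding baire_property_def by metis
  have "meager (\<Union>n. sym_diff (A n) (U n))"
    using U(2) by (intro meager_Union) auto
  moreover have "sym_diff (\<Union>n. A n) (\<Union>n. U n) \<subseteq> (\<Union>n. sym_diff (A n) (U n))"
    by blast
  ultimately show ?thesis
    unfolding baire_property_def using U(1) by (intro exI[of _ "\<Union>n. U n"]) (auto intro: meager_subset)
qed

lemma borel_imp_baire_property:
  assumes "B \<in> sets borel"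
  shows "baire_property B"
proof -
  have "B \<in> sigma_sets UNIV {S. open S}"
    using assms sets_borel by auto
  then show ?thesis
  proof induction
    case (Basic a)
    then show ?case
      unfolding baire_property_def by (intro exI[of _ a]) (auto simp: meager_def)
  next
    case Empty
    then show ?case
      unfolding baire_property_def by (intro exI[of _ "{}"]) (auto simp: meager_def)
  next
    case (Compl a)
    then show ?case
      using baire_property_Compl by (simp add: Compl_eq_Diff_UNIV[symmetric])
  next
    case (Union a)
    then show ?case
      using baire_property_UN by auto
  qed
qed

lemma nonmeager_borel_contains_open_minus_meager:
  assumes "B \<in> sets borel" "\<not> meager B"
  obtains U M where "open U" "U \<noteq> {}" "meager M" "U - M \<subseteq> B"
proof -
  obtain U where U: "open U" "meager (sym_diff B U)"
    using borel_imp_baire_property[OF assms(1)] unfolding baire_property_def by blast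
  have "U \<noteq> {}"
    using U(2) assms(2) by auto
  with U show thesis
    using that[of U "sym_diff B U"] by blast
qed

section \<open>Lebesgue measure\<close>

lemma null_subset_null_gdelta:
  assumes "N \<in> null_sets lebesgue"
  obtains C :: "real set" where "gdelta C" "C \<in> null_sets lebesgue" "N \<subseteq> C"
proof -
  obtain C T where "gdelta C" "T \<in> null_sets lebesgue" "N \<union> T = C"
    using lebesgue_set_almost_gdelta[of N] assms by blast
  with assms that show thesis
    by blast
qed

lemma positive_measure_contains_fsigma:
  assumes "B \<in> sets lebesgue" "emeasure lebesgue B > 0"
  obtains C :: "real set" where "fsigma C" "C \<notin> null_sets lebesgue" "C \<subseteq> B"
proof -
  obtain C T where C: "fsigma C" "T \<in> null_sets lebesgue" "C \<union> T = B"
    using lebesgue_set_almost_fsigma[OF assms(1)] by blast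
  have "C \<notin> null_sets lebesgue"
    using C assms(2) by (metis less_irrefl null_setsD1 null_sets.Un)
  with C that show thesis
    by blast
qed

lemma not_null_not_subset:
  assumes "T \<notin> null_sets lebesgue" "(N::real set) \<in> null_sets lebesgue"
  shows "\<not> T \<subseteq> N"
  using assms completion.complete2 by blast

section \<open>Families of at most continuum size\<close>

lemma countable_sets_lepoll_real: "(UNIV :: 'a::countable set set) \<lesssim> (UNIV :: real set)"
proof -
  have "inj (\<lambda>S::'a set. to_nat ` S)"
    by (meson inj_image_eq_iff inj_onI inj_to_nat)
  then have "(UNIV :: 'a set set) \<lesssim> (UNIV :: nat set set)"
    unfolding lepoll_def by blast
  also have "\<dots> \<approx> (UNIV :: real set)"
    by (rule nat_sets_eqpoll_reals)
  finally show ?thesis .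
qed

lemma Times_lepoll_real:
  assumes "A \<lesssim> (UNIV :: real set)" "B \<lesssim> (UNIV :: real set)"
  shows "A \<times> B \<lesssim> (UNIV :: real set)"
proof -
  note real_lepoll_nat_sets = eqpoll_sym[OF nat_sets_eqpoll_reals]
  have "A \<times> B \<lesssim> (UNIV :: nat set set) \<times> (UNIV :: nat set set)"
    using lepoll_trans2[OF assms(1) real_lepoll_nat_sets] lepoll_trans2[OF assms(2) real_lepoll_nat_sets]
    by (rule times_lepoll_mono)
  also have "\<dots> \<lesssim> (UNIV :: (nat + nat) set set)"
    unfolding lepoll_def by (intro exI[of _ "\<lambda>(S, T). Inl ` S \<union> Inr ` T"]) (auto simp: inj_on_def)
  also have "\<dots> \<lesssim> (UNIV :: real set)"
    by (rule countable_sets_lepoll_real)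
  finally show ?thesis .
qed

lemma lepoll_imp_image_eq:
  assumes "A \<noteq> {}" "A \<lesssim> B"
  shows "\<exists>s. s ` B = A"
proof -
  obtain g where "A \<subseteq> g ` B"
    using assms(2) unfolding lepoll_iff by blast
  obtain a where "a \<in> A"
    using assms(1) by auto
  then have "(\<lambda>x. if g x \<in> A then g x else a) ` B = A"
  proof (intro equalityI subsetI)
    fix y assume "y \<in> A"
    then obtain x where "x \<in> B" "y = g x"
      using \<open>A \<subseteq> g ` B\<close> by blast
    with \<open>y \<in> A\<close> show "y \<in> (\<lambda>x. if g x \<in> A then g x else a) ` B"
      by (intro image_eqI[of _ _ x]) auto
  qed (use \<open>a \<in> A\<close> in auto)
  then show ?thesis
    by (rule exI[of "\<lambda>s. s ` B = A"])
qed

definition rat_intervals_union :: "(rat \<times> rat) set \<Rightarrow> real set" where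
  "rat_intervals_union S = (\<Union>(p, q)\<in>S. {of_rat p <..< of_rat q})"

lemma rat_between: "(x::real) < y \<Longrightarrow> \<exists>q. x < of_rat q \<and> of_rat q < y"
  by (metis Rats_cases Rats_dense_in_real)

lemma open_in_range_rat_intervals_union:
  assumes "open U"
  shows "U \<in> range rat_intervals_union"
proof -
  have "U = rat_intervals_union {(p, q). {of_rat p <..< of_rat q} \<subseteq> U}"
  proof
    show "U \<subseteq> rat_intervals_union {(p, q). {of_rat p <..< of_rat q} \<subseteq> U}"
    proof
      fix x assume "x \<in> U"
      then obtain e where "e > 0" "ball x e \<subseteq> U"
        using \<open>open U\<close> open_contains_ball by blast
      moreover obtain p q where "x - e < of_rat p" "of_rat p < x" "x < of_rat q" "of_rat q < x + e"
        using rat_between[of "x - e" x] rat_between[of x "x + e"] \<open>e > 0\<close> by auto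
      ultimately show "x \<in> rat_intervals_union {(p, q). {of_rat p <..< of_rat q} \<subseteq> U}"
        unfolding rat_intervals_union_def by (force simp: dist_real_def)
    qed
  qed (auto simp: rat_intervals_union_def)
  then show ?thesis
    by blast
qed

definition fsigma_code :: "(nat \<times> rat \<times> rat) set \<Rightarrow> real set" where
  "fsigma_code S = (\<Union>n. - rat_intervals_union {pq. (n, pq) \<in> S})"

lemma fsigma_in_range_code:
  assumes "fsigma C"
  shows "C \<in> range fsigma_code"
  using assms
proof induction
  case (1 F)
  have "- F n \<in> range rat_intervals_union" for n
    using 1 by (intro open_in_range_rat_intervals_union) auto
  then have "\<forall>n. \<exists>T. rat_intervals_union T = - F n"
    by (metis imageE)
  then obtain T where "\<And>n. rat_intervals_union (T n) = - F n"
    by metis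
  then have "(\<Union>n. F n) = fsigma_code {(n, pq). pq \<in> T n}"
    unfolding fsigma_code_def by simp
  then show ?case
    by (rule range_eqI)
qed

lemma fsigma_lepoll_real: "{C :: real set. fsigma C} \<lesssim> (UNIV :: real set)"
proof -
  have "{C :: real set. fsigma C} \<subseteq> fsigma_code ` UNIV"
    using fsigma_in_range_code by blast
  then show ?thesis
    using lepoll_trans[OF subset_image_lepoll countable_sets_lepoll_real] by blast
qed

lemma gdelta_lepoll_real: "{C :: real set. gdelta C} \<lesssim> (UNIV :: real set)"
proof -
  have "{C :: real set. gdelta C} \<subseteq> uminus ` {C. fsigma C}"
    using gdelta_imp_fsigma by (force simp: image_iff)
  then show ?thesis
    using lepoll_trans[OF subset_image_lepoll fsigma_lepoll_real] by blast
qed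

definition rat_points_below_graph :: "(real \<Rightarrow> real) \<Rightarrow> (rat \<times> rat) set" where
  "rat_points_below_graph f = {(q, r). of_rat r < f (of_rat q)}"

lemma rat_point_between_graphs:
  fixes f g :: "real \<Rightarrow> real"
  assumes "continuous_on UNIV f" "continuous_on UNIV g" "f x < g x"
  obtains q r where "f (of_rat q) \<le> of_rat r" "of_rat r < g (of_rat q)"
proof -
  let ?S = "{y. f y < g y}"
  have "open ?S"
    by (rule open_Collect_less[OF assms(1,2)])
  moreover have "?S \<inter> closure \<rat> \<noteq> {}"
    using assms(3) Rats_closure_real by auto
  ultimately obtain q where "f (of_rat q) < g (of_rat q)"
    using open_Int_closure_eq_empty Rats_cases by blast
  with rat_between that show thesis
    by (meson less_le_not_le)
qed

lemma inj_on_rat_points_below_graph: "inj_on rat_points_below_graph {f. continuous_on UNIV f}"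
proof (intro inj_onI ext)
  fix f g x
  assume cont: "f \<in> {f. continuous_on UNIV f}" "g \<in> {f. continuous_on UNIV f}"
    and eq: "rat_points_below_graph f = rat_points_below_graph g"
  have "\<not> h x < k x" if hk: "h \<in> {f, g}" "k \<in> {f, g}" for h k
  proof
    assume "h x < k x"
    moreover have "continuous_on UNIV h" "continuous_on UNIV k"
      using hk cont by auto
    ultimately obtain q r where "h (of_rat q) \<le> of_rat r" "of_rat r < k (of_rat q)"
      using rat_point_between_graphs by blast
    then have "(q, r) \<in> rat_points_below_graph k - rat_points_below_graph h"
      by (simp add: rat_points_below_graph_def)
    moreover have "rat_points_below_graph h = rat_points_below_graph k"
      using eq hk by auto
    ultimately show False
      by simp
  qed
  then show "f x = g x"
    by (meson insertCI linorder_neqE)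
qed

lemma continuous_lepoll_real: "{f :: real \<Rightarrow> real. continuous_on UNIV f} \<lesssim> (UNIV :: real set)"
proof -
  have "{f :: real \<Rightarrow> real. continuous_on UNIV f} \<lesssim> (UNIV :: (rat \<times> rat) set set)"
    unfolding lepoll_def using inj_on_rat_points_below_graph by blast
  then show ?thesis
    using countable_sets_lepoll_real by (rule lepoll_trans)
qed

lemma open_lepoll_real: "{U :: real set. open U} \<lesssim> (UNIV :: real set)"
proof -
  have "{U :: real set. open U} \<subseteq> rat_intervals_union ` UNIV"
    using open_in_range_rat_intervals_union by blast
  then show ?thesis
    using lepoll_trans[OF subset_image_lepoll countable_sets_lepoll_real] by blast
qed

lemma enumerate_Times3:
  fixes A :: "'a set" and B :: "'b set" and C :: "'c set"
  assumes "A \<noteq> {}" "B \<noteq> {}" "C \<noteq> {}"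
    and "A \<lesssim> (UNIV :: real set)" "B \<lesssim> (UNIV :: real set)" "C \<lesssim> (UNIV :: real set)"
  obtains f g h where "\<And>t::real. f t \<in> A" "\<And>t. g t \<in> B" "\<And>t. h t \<in> C"
    "\<And>a b c. a \<in> A \<Longrightarrow> b \<in> B \<Longrightarrow> c \<in> C \<Longrightarrow> \<exists>t. f t = a \<and> g t = b \<and> h t = c"
proof -
  have "A \<times> B \<times> C \<noteq> {}"
    using assms(1-3) by simp
  moreover have "A \<times> B \<times> C \<lesssim> (UNIV :: real set)"
    using assms(4-6) by (intro Times_lepoll_real)
  ultimately have "\<exists>s. s ` (UNIV :: real set) = A \<times> B \<times> C"
    by (rule lepoll_imp_image_eq)
  then obtain s :: "real \<Rightarrow> 'a \<times> 'b \<times> 'c" where s: "s ` UNIV = A \<times> B \<times> C" ..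
  then have in_ABC: "s t \<in> A \<times> B \<times> C" for t
    by blast
  show thesis
  proof (rule that[of "\<lambda>t. fst (s t)" "\<lambda>t. fst (snd (s t))" "\<lambda>t. snd (snd (s t))"])
    fix a b c assume "a \<in> A" "b \<in> B" "c \<in> C"
    then have "(a, b, c) \<in> range s"
      using s by simp
    then obtain t where "s t = (a, b, c)"
      by (metis rangeE)
    then show "\<exists>t. fst (s t) = a \<and> fst (snd (s t)) = b \<and> snd (snd (s t)) = c"
      by (intro exI[of _ t]) simp
  qed (use in_ABC in \<open>simp_all add: mem_Times_iff\<close>)
qed

section \<open>An \<open>\<omega>\<^sub>1\<close>-like well-order of the reals\<close>

lemma CH_imp_countable_initial_segments:
  assumes CH
  obtains less :: "real \<Rightarrow> real \<Rightarrow> bool"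
  where "wf {(b, a). less b a}" "\<And>a b c. less a b \<Longrightarrow> less b c \<Longrightarrow> less a c"
    "\<And>a b. a \<noteq> b \<Longrightarrow> less a b \<or> less b a" "\<And>a. countable {b. less b a}"
proof
  \<comment> \<open>\<open>|UNIV|\<close> has the order type of the least ordinal of size continuum, so CH makes its
    proper initial segments countable.\<close>
  define r where "r = |UNIV :: real set|"
  have r: "Well_order r" "Field r = UNIV"
    unfolding r_def by (rule card_of_Well_order, rule Field_card_of)
  have eq: "{(b, a). (b, a) \<in> r \<and> b \<noteq> a} = r - Id"
    by auto
  show "wf {(b, a). (b, a) \<in> r \<and> b \<noteq> a}"
    unfolding eq using r(1) wo_rel.WF wo_rel_def by blast
  show "(a, c) \<in> r \<and> a \<noteq> c" if "(a, b) \<in> r \<and> a \<noteq> b" "(b, c) \<in> r \<and> b \<noteq> c" for a b c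
    using that r(1) unfolding well_order_on_def linear_order_on_def partial_order_on_def
      preorder_on_def trans_def antisym_def by blast
  show "(a, b) \<in> r \<and> a \<noteq> b \<or> (b, a) \<in> r \<and> b \<noteq> a" if "a \<noteq> b" for a b
    using that r unfolding well_order_on_def linear_order_on_def total_on_def by auto
  show "countable {b. (b, a) \<in> r \<and> b \<noteq> a}" for a
  proof (rule ccontr)
    assume "\<not> ?thesis"
    moreover have "{b. (b, a) \<in> r \<and> b \<noteq> a} = underS r a"
      unfolding underS_def by auto
    ultimately have "|underS r a| =o r"
      using \<open>CH\<close> unfolding CH_def r_def eqpoll_iff_card_of_ordIso by auto
    moreover have "|underS r a| <o r"
      using card_of_underS[of r a] card_of_Card_order[of "UNIV :: real set"] r(2) unfolding r_def by auto
    ultimately show False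
      using not_ordLess_ordIso by blast
  qed
qed

section \<open>Rational linear algebra in the plane\<close>

interpretation Q: vector_space "\<lambda>q::rat. \<lambda>v::real \<times> real. of_rat q *\<^sub>R v"
  by unfold_locales (simp_all add: scaleR_add_right scaleR_add_left of_rat_add of_rat_mult)

lemma hamel_basis_iff: "hamel_basis A \<longleftrightarrow> Q.independent A \<and> Q.span A = UNIV"
proof -
  have "rat_independent A \<longleftrightarrow> Q.independent A"
    unfolding rat_independent_def Q.dependent_explicit by blast
  moreover have "rat_span A = Q.span A"
    unfolding rat_span_def Q.span_explicit by blast
  ultimately show ?thesis
    unfolding hamel_basis_def by simp
qed

lemma countable_span:
  assumes "countable P"
  shows "countable (Q.span P)"
proof -
  let ?X = "SIGMA t:{t. finite t \<and> t \<subseteq> P}. t \<rightarrow>\<^sub>E (UNIV :: rat set)"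
  have "countable ?X"
    using countable_Collect_finite_subset[OF assms] by (intro countable_SIGMA countable_PiE) auto
  then have countable_sums: "countable ((\<lambda>(t, c). \<Sum>a\<in>t. of_rat (c a) *\<^sub>R a) ` ?X)"
    by (rule countable_image)
  have "Q.span P \<subseteq> (\<lambda>(t, c). \<Sum>a\<in>t. of_rat (c a) *\<^sub>R a) ` ?X"
  proof
    fix y assume "y \<in> Q.span P"
    then obtain t c where tc: "finite t" "t \<subseteq> P" "y = (\<Sum>a\<in>t. of_rat (c a) *\<^sub>R a)"
      unfolding Q.span_explicit by blast
    then have "y = (\<Sum>a\<in>t. of_rat (restrict c t a) *\<^sub>R a)"
      by simp
    moreover have "(t, restrict c t) \<in> ?X"
      using tc by simp
    ultimately show "y \<in> (\<lambda>(t, c). \<Sum>a\<in>t. of_rat (c a) *\<^sub>R a) ` ?X"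
      by (intro rev_image_eqI[of "(t, restrict c t)"]) simp_all
  qed
  then show ?thesis
    using countable_sums by (rule countable_subset)
qed

lemma (in vector_space) independent_insert_diff:
  assumes "independent P" "v \<notin> span P" "p \<notin> span (insert v P)"
  shows "independent (insert (v - p) (insert p P))" "v \<in> span (insert (v - p) (insert p P))"
proof -
  have "p \<notin> span P"
    using assms(3) span_mono[of P "insert v P"] by blast
  then have indep: "independent (insert p P)"
    using assms(1) by (rule independent_insertI)
  have p_in: "p \<in> span (insert p P)"
    by (simp add: span_base)
  have "v \<notin> span (insert p P)"
    using in_span_insert assms(2,3) by blast
  then have "v - p \<notin> span (insert p P)"
    using span_add[OF _ p_in, of "v - p"] by auto
  then show "independent (insert (v - p) (insert p P))"
    using indep by (rule independent_insertI)
  have "v - p \<in> span (insert (v - p) (insert p P))" "p \<in> span (insert (v - p) (insert p P))"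
    by (simp_all add: span_base)
  then show "v \<in> span (insert (v - p) (insert p P))"
    using span_add by fastforce
qed

section \<open>Graphs of monotone functions\<close>

lemma countable_subsingleton:
  assumes "\<And>x y. x \<in> S \<Longrightarrow> y \<in> S \<Longrightarrow> x = y"
  shows "countable S"
proof (cases "S = {}")
  case False
  then obtain x where "x \<in> S"
    by blast
  with assms have "S = {x}"
    by blast
  then show ?thesis
    by simp
qed simp

lemma increasing_decreasing_cross_once:
  fixes f g :: "real \<Rightarrow> real"
  assumes "strict_mono f" "\<And>x y. x < y \<Longrightarrow> g y < g x" "f x = g x" "f y = g y"
  shows "x = y"
proof -
  have False if "u < w" "f u = g u" "f w = g w" for u w
  proof -
    have "f u < f w"
      using assms(1) \<open>u < w\<close> by (rule strict_monoD)
    moreover have "g w < g u"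
      using assms(2) \<open>u < w\<close> .
    ultimately show False
      using that by simp
  qed
  with assms(3,4) show ?thesis
    by (cases x y rule: linorder_cases) auto
qed

lemma decreasing_imp_inj:
  fixes g :: "real \<Rightarrow> real"
  assumes "\<And>x y. x < y \<Longrightarrow> g y < g x"
  shows "inj g"
proof (rule injI)
  fix x y assume "g x = g y"
  then have "\<not> x < y" "\<not> y < x"
    using assms by force+
  then show "x = y"
    by simp
qed

lemma locally_abs_continuous_imp_continuous:
  assumes "locally_abs_continuous g"
  shows "continuous_on UNIV g"
proof -
  have "\<exists>d>0. \<forall>y. dist y x < d \<longrightarrow> dist (g y) (g x) < e" if "e > 0" for x e
  proof -
    have "abs_continuous_on_interval g (x - 1) (x + 1)"
      using assms unfolding locally_abs_continuous_def by simp
    then obtain \<delta> where "\<delta> > 0" and \<delta>: "\<forall>(n::nat) u v.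
        (\<forall>i<n. x - 1 \<le> u i \<and> u i \<le> v i \<and> v i \<le> x + 1)
        \<and> (\<forall>i<n. \<forall>j<n. i \<noteq> j \<longrightarrow> v i \<le> u j \<or> v j \<le> u i) \<and> (\<Sum>i<n. v i - u i) < \<delta>
        \<longrightarrow> (\<Sum>i<n. \<bar>g (v i) - g (u i)\<bar>) < e"
      unfolding abs_continuous_on_interval_def using \<open>e > 0\<close> by blast
    show ?thesis
    proof (intro exI[of _ "min \<delta> 1"] conjI allI impI)
      fix y assume "dist y x < min \<delta> 1"
      then have "x - 1 \<le> min x y" "max x y \<le> x + 1" "max x y - min x y < \<delta>"
        by (auto simp: dist_real_def min_def max_def split: if_splits)
      then have "(\<Sum>i<Suc 0. \<bar>g (max x y) - g (min x y)\<bar>) < e"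
        using \<delta>[rule_format, of 1 "\<lambda>_. min x y" "\<lambda>_. max x y"] by simp
      then show "dist (g y) (g x) < e"
        by (cases "x \<le> y") (simp_all add: dist_real_def abs_minus_commute)
    qed (use \<open>\<delta> > 0\<close> in simp)
  qed
  then show ?thesis
    by (simp add: continuous_at_eps_delta continuous_at_imp_continuous_on)
qed

section \<open>The transfinite construction\<close>

locale graph_basis_construction =
  fixes less :: "'i \<Rightarrow> 'i \<Rightarrow> bool" (infix \<open>\<sqsubset>\<close> 50)
    and F G :: "'i \<Rightarrow> real \<Rightarrow> real"
    and M N U K :: "'i \<Rightarrow> real set"
    and v :: "'i \<Rightarrow> real \<times> real"
  assumes wf_less: "wf {(b, a). b \<sqsubset> a}"
    and less_trans: "a \<sqsubset> b \<Longrightarrow> b \<sqsubset> c \<Longrightarrow> a \<sqsubset> c"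
    and less_linear: "a \<noteq> b \<Longrightarrow> a \<sqsubset> b \<or> b \<sqsubset> a"
    and countable_less: "countable {b. b \<sqsubset> a}"
    and strict_mono_F: "strict_mono (F a)"
    and G_decreasing: "x < y \<Longrightarrow> G a y < G a x"
    and meager_M: "meager (M a)"
    and null_N: "N a \<in> null_sets lebesgue"
begin

definition M_before :: "'i \<Rightarrow> real set" where
  "M_before a = (\<Union>b\<in>{b. b \<sqsubset> a}. M b)"

definition N_before :: "'i \<Rightarrow> real set" where
  "N_before a = (\<Union>b\<in>{b. b \<sqsubset> a}. N b)"

lemma meager_M_before: "meager (M_before a)"
  unfolding M_before_def using countable_less meager_M by (intro meager_Union) auto

lemma null_N_before: "N_before a \<in> null_sets lebesgue"
  unfolding N_before_def using countable_less null_N by (intro null_sets_UN') auto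

text \<open>The invariant that keeps every graph small inside every enumerated meager or null set.\<close>

definition admissible :: "'i \<Rightarrow> real \<times> real \<Rightarrow> bool" where
  "admissible a p \<longleftrightarrow>
     (\<forall>b. b \<sqsubset> a \<and> snd p = F b (fst p) \<longrightarrow> fst p \<notin> M_before a)
   \<and> (\<forall>b. b \<sqsubset> a \<and> snd p = G b (fst p) \<longrightarrow> fst p \<notin> N_before a)"

definition admissible_extension :: "'i \<Rightarrow> (real \<times> real) set \<Rightarrow> (real \<times> real) set \<Rightarrow> bool" where
  "admissible_extension a P Q \<longleftrightarrow> finite Q \<and> Q.independent (P \<union> Q) \<and> (\<forall>p\<in>Q. admissible a p)"

definition meets_requirements :: "'i \<Rightarrow> (real \<times> real) set \<Rightarrow> (real \<times> real) set \<Rightarrow> bool" where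
  "meets_requirements a P Q \<longleftrightarrow> admissible_extension a P Q
     \<and> (\<not> meager (U a) \<longrightarrow> (\<exists>x\<in>U a - M a. (x, F a x) \<in> Q))
     \<and> (K a \<notin> null_sets lebesgue \<longrightarrow> (\<exists>x\<in>K a - N a. (x, G a x) \<in> Q))
     \<and> v a \<in> Q.span (P \<union> Q)"

lemma admissible_extension_empty: "Q.independent P \<Longrightarrow> admissible_extension a P {}"
  by (simp add: admissible_extension_def)

lemma admissible_extension_singleton:
  "Q.independent P \<Longrightarrow> p \<notin> Q.span P \<Longrightarrow> admissible a p \<Longrightarrow> admissible_extension a P {p}"
  by (simp add: admissible_extension_def Q.independent_insertI)

lemma admissible_extension_Un:
  assumes "admissible_extension a P Q1" "admissible_extension a (P \<union> Q1) Q2"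
  shows "admissible_extension a P (Q1 \<union> Q2)"
  using assms unfolding admissible_extension_def by (simp add: Un_assoc ball_Un)

definition earlier_graph_hits :: "'i \<Rightarrow> real \<Rightarrow> real set" where
  "earlier_graph_hits a y = {x. \<exists>b. b \<sqsubset> a \<and> (F b x = y \<or> G b x = y)}"

lemma countable_earlier_graph_hits: "countable (earlier_graph_hits a y)"
proof -
  have "countable {x. h x = y}" if "inj h" for h :: "real \<Rightarrow> real"
    using that by (intro countable_subsingleton) (auto dest: injD)
  moreover have "inj (F b)" "inj (G b)" for b
    using strict_mono_F decreasing_imp_inj[OF G_decreasing] by (auto intro: strict_mono_imp_inj_on)
  ultimately have "countable ({x. F b x = y} \<union> {x. G b x = y})" for b
    by simp
  then have "countable (\<Union>b\<in>{b. b \<sqsubset> a}. {x. F b x = y} \<union> {x. G b x = y})"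
    by (intro countable_UN[OF countable_less])
  moreover have "earlier_graph_hits a y = (\<Union>b\<in>{b. b \<sqsubset> a}. {x. F b x = y} \<union> {x. G b x = y})"
    unfolding earlier_graph_hits_def by blast
  ultimately show ?thesis
    by simp
qed

lemma admissible_off_earlier_graphs: "fst p \<notin> earlier_graph_hits a (snd p) \<Longrightarrow> admissible a p"
  unfolding admissible_def earlier_graph_hits_def by auto

lemma luzin_extension:
  assumes "countable P" "Q.independent P"
  shows "\<exists>Q. admissible_extension a P Q \<and> (\<not> meager (U a) \<longrightarrow> (\<exists>x\<in>U a - M a. (x, F a x) \<in> Q))"
proof (cases "meager (U a)")
  case True
  then show ?thesis
    using admissible_extension_empty[OF assms(2)] by blast
next
  case False
  \<comment> \<open>Off the crossings with earlier decreasing graphs, only earlier meager sets must be avoided.\<close>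
  let ?Z = "M a \<union> M_before a \<union> (\<Union>b\<in>{b. b \<sqsubset> a}. {x. F a x = G b x}) \<union> fst ` Q.span P"
  have "countable {x. F a x = G b x}" for b
    using increasing_decreasing_cross_once[OF strict_mono_F G_decreasing]
    by (intro countable_subsingleton) auto
  then have "countable (\<Union>b\<in>{b. b \<sqsubset> a}. {x. F a x = G b x})"
    using countable_less by (intro countable_UN)
  then have "meager ?Z"
    using countable_image[OF countable_span[OF assms(1)], of fst]
    by (intro meager_Un meager_M meager_M_before) (simp_all add: meager_countable)
  then obtain x where x: "x \<in> U a" "x \<notin> ?Z"
    using False meager_subset by blast
  then have "(x, F a x) \<notin> Q.span P"
    by force
  moreover have "admissible a (x, F a x)"
    using x unfolding admissible_def by auto
  ultimately have "admissible_extension a P {(x, F a x)}"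
    using assms(2) by (rule admissible_extension_singleton[rotated])
  with x show ?thesis
    by blast
qed

lemma sierpinski_extension:
  assumes "countable P" "Q.independent P"
  shows "\<exists>Q. admissible_extension a P Q
    \<and> (K a \<notin> null_sets lebesgue \<longrightarrow> (\<exists>x\<in>K a - N a. (x, G a x) \<in> Q))"
proof (cases "K a \<in> null_sets lebesgue")
  case True
  then show ?thesis
    using admissible_extension_empty[OF assms(2)] by blast
next
  case False
  let ?Z = "N a \<union> N_before a \<union> (\<Union>b\<in>{b. b \<sqsubset> a}. {x. F b x = G a x}) \<union> fst ` Q.span P"
  have "countable {x. F b x = G a x}" for b
    using increasing_decreasing_cross_once[OF strict_mono_F G_decreasing]
    by (intro countable_subsingleton) auto
  then have "countable (\<Union>b\<in>{b. b \<sqsubset> a}. {x. F b x = G a x})"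
    using countable_less by (intro countable_UN)
  then have "?Z \<in> null_sets lebesgue"
    using countable_image[OF countable_span[OF assms(1)], of fst] null_N null_N_before
    by (intro null_sets.Un) (simp_all add: countable_imp_null_set_lborel null_sets_completionI)
  then obtain x where x: "x \<in> K a" "x \<notin> ?Z"
    using False not_null_not_subset by blast
  then have "(x, G a x) \<notin> Q.span P"
    by force
  moreover have "admissible a (x, G a x)"
    using x unfolding admissible_def by auto
  ultimately have "admissible_extension a P {(x, G a x)}"
    using assms(2) by (rule admissible_extension_singleton[rotated])
  with x show ?thesis
    by blast
qed

lemma span_extension:
  assumes "countable P" "Q.independent P"
  shows "\<exists>Q. admissible_extension a P Q \<and> v a \<in> Q.span (P \<union> Q)"
proof (cases "v a \<in> Q.span P")
  case True
  then show ?thesis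
    using admissible_extension_empty[OF assms(2), of a] by (intro exI[of _ "{}"]) simp
next
  case False
  \<comment> \<open>Split \<open>v a\<close> as \<open>p + (v a - p)\<close> with \<open>p = (x, 0)\<close>, both summands off all earlier graphs.\<close>
  define Z where "Z = fst ` Q.span (insert (v a) P) \<union> earlier_graph_hits a 0
    \<union> (\<lambda>x. fst (v a) - x) ` earlier_graph_hits a (snd (v a))"
  have "countable Z"
    unfolding Z_def using assms(1) countable_earlier_graph_hits
    by (intro countable_Un countable_image countable_span) simp_all
  then have "Z \<noteq> UNIV"
    using uncountable_UNIV_real by auto
  then obtain x where x: "x \<notin> Z"
    by auto
  define p where "p = (x, 0::real)"
  have "p \<notin> Q.span (insert (v a) P)"
    using x unfolding p_def Z_def by force
  then have indep: "Q.independent (P \<union> {p, v a - p})" and spans: "v a \<in> Q.span (P \<union> {p, v a - p})"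
    using Q.independent_insert_diff[OF assms(2) False] by (simp_all add: insert_commute)
  have "admissible a p"
    using x unfolding p_def Z_def by (intro admissible_off_earlier_graphs) simp
  have "fst (v a) - x \<notin> earlier_graph_hits a (snd (v a))"
  proof
    assume "fst (v a) - x \<in> earlier_graph_hits a (snd (v a))"
    then have "x \<in> (\<lambda>x. fst (v a) - x) ` earlier_graph_hits a (snd (v a))"
      by (rule rev_image_eqI) simp
    with x show False
      unfolding Z_def by blast
  qed
  then have "admissible a (v a - p)"
    unfolding p_def by (intro admissible_off_earlier_graphs) simp
  with \<open>admissible a p\<close> have "admissible_extension a P {p, v a - p}"
    using indep unfolding admissible_extension_def by simp
  with spans show ?thesis
    by blast
qed

lemma requirements_satisfiable:
  assumes "countable P" "Q.independent P"
  shows "\<exists>Q. meets_requirements a P Q"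
proof -
  obtain Q1 where Q1: "admissible_extension a P Q1"
    "\<not> meager (U a) \<longrightarrow> (\<exists>x\<in>U a - M a. (x, F a x) \<in> Q1)"
    using luzin_extension[OF assms] by blast
  then have "countable (P \<union> Q1)" "Q.independent (P \<union> Q1)"
    using assms(1) by (simp_all add: admissible_extension_def countable_finite)
  then obtain Q2 where Q2: "admissible_extension a (P \<union> Q1) Q2"
    "K a \<notin> null_sets lebesgue \<longrightarrow> (\<exists>x\<in>K a - N a. (x, G a x) \<in> Q2)"
    using sierpinski_extension by blast
  then have "countable (P \<union> (Q1 \<union> Q2))" "Q.independent (P \<union> (Q1 \<union> Q2))"
    using \<open>countable (P \<union> Q1)\<close> by (simp_all add: admissible_extension_def countable_finite Un_assoc)
  then obtain Q3 where Q3: "admissible_extension a (P \<union> (Q1 \<union> Q2)) Q3"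
    "v a \<in> Q.span (P \<union> (Q1 \<union> Q2) \<union> Q3)"
    using span_extension by blast
  have "admissible_extension a P (Q1 \<union> Q2 \<union> Q3)"
    using admissible_extension_Un[OF admissible_extension_Un[OF Q1(1) Q2(1)]] Q3(1) by (simp add: Un_assoc)
  then have "meets_requirements a P (Q1 \<union> Q2 \<union> Q3)"
    using Q1(2) Q2(2) Q3(2) unfolding meets_requirements_def by (auto simp: Un_assoc)
  then show ?thesis ..
qed

definition stage :: "'i \<Rightarrow> (real \<times> real) set" where
  "stage = wfrec {(b, a). b \<sqsubset> a} (\<lambda>stage a. SOME Q. meets_requirements a (\<Union>b\<in>{b. b \<sqsubset> a}. stage b) Q)"

definition earlier :: "'i \<Rightarrow> (real \<times> real) set" where
  "earlier a = (\<Union>b\<in>{b. b \<sqsubset> a}. stage b)"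

definition graph_basis :: "(real \<times> real) set" where
  "graph_basis = (\<Union>a. stage a)"

lemma stage_eq: "stage a = (SOME Q. meets_requirements a (earlier a) Q)"
proof -
  have "stage a = (SOME Q. meets_requirements a (\<Union>b\<in>{b. b \<sqsubset> a}. cut stage {(b, a). b \<sqsubset> a} a b) Q)"
    unfolding stage_def by (subst wfrec[OF wf_less]) simp
  also have "(\<Union>b\<in>{b. b \<sqsubset> a}. cut stage {(b, a). b \<sqsubset> a} a b) = earlier a"
    unfolding earlier_def by (simp add: cut_apply)
  finally show ?thesis .
qed

lemma earlier_mono: "b \<sqsubset> c \<Longrightarrow> earlier b \<union> stage b \<subseteq> earlier c"
  unfolding earlier_def using less_trans by blast

lemma independent_UN_earlier_stage:
  assumes "\<And>b. b \<in> I \<Longrightarrow> Q.independent (earlier b \<union> stage b)"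
  shows "Q.independent (\<Union>b\<in>I. earlier b \<union> stage b)"
proof (rule Q.independent_Union_directed)
  fix X Y assume "X \<in> (\<lambda>b. earlier b \<union> stage b) ` I" "Y \<in> (\<lambda>b. earlier b \<union> stage b) ` I"
  then obtain b c where "X = earlier b \<union> stage b" "Y = earlier c \<union> stage c"
    by blast
  then show "X \<subseteq> Y \<or> Y \<subseteq> X"
    using less_linear[of b c] earlier_mono[of b c] earlier_mono[of c b] by (cases "b = c") auto
qed (use assms in auto)

lemma meets_requirements_stage: "meets_requirements a (earlier a) (stage a)"
proof (induction a rule: wf_induct_rule[OF wf_less])
  case (1 a)
  then have finite: "finite (stage b)" and indep: "Q.independent (earlier b \<union> stage b)" if "b \<sqsubset> a" for b
    using that by (simp_all add: meets_requirements_def admissible_extension_def)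
  have "countable (earlier a)"
    unfolding earlier_def using finite by (intro countable_UN[OF countable_less] countable_finite) auto
  moreover have "earlier a = (\<Union>b\<in>{b. b \<sqsubset> a}. earlier b \<union> stage b)"
  proof
    show "earlier a \<subseteq> (\<Union>b\<in>{b. b \<sqsubset> a}. earlier b \<union> stage b)"
      unfolding earlier_def by blast
    show "(\<Union>b\<in>{b. b \<sqsubset> a}. earlier b \<union> stage b) \<subseteq> earlier a"
      using earlier_mono by blast
  qed
  then have "Q.independent (earlier a)"
    using indep independent_UN_earlier_stage[of "{b. b \<sqsubset> a}"] by simp
  ultimately have "\<exists>Q. meets_requirements a (earlier a) Q"
    by (rule requirements_satisfiable)
  then show ?case
    unfolding stage_eq by (rule someI_ex)
qed

lemma independent_graph_basis: "Q.independent graph_basis"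
proof -
  have "graph_basis = (\<Union>a. earlier a \<union> stage a)"
    unfolding graph_basis_def earlier_def by blast
  then show ?thesis
    using independent_UN_earlier_stage[of UNIV] meets_requirements_stage
    by (simp add: meets_requirements_def admissible_extension_def)
qed

lemma v_in_span_graph_basis: "v a \<in> Q.span graph_basis"
proof -
  have "v a \<in> Q.span (earlier a \<union> stage a)"
    using meets_requirements_stage by (simp add: meets_requirements_def)
  moreover have "earlier a \<union> stage a \<subseteq> graph_basis"
    unfolding graph_basis_def earlier_def by blast
  ultimately show ?thesis
    using Q.span_mono by blast
qed

lemma countable_up_to: "countable (earlier a \<union> stage a)"
proof -
  have "finite (stage b)" for b
    using meets_requirements_stage by (simp add: meets_requirements_def admissible_extension_def)
  then show ?thesis
    unfolding earlier_def by (intro countable_Un countable_UN[OF countable_less] countable_finite) auto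
qed

lemma later_stage:
  assumes "p \<in> stage c" "p \<notin> earlier a \<union> stage a"
  shows "a \<sqsubset> c"
  using assms less_linear[of a c] unfolding earlier_def by auto

lemma admissible_stage: "p \<in> stage c \<Longrightarrow> admissible c p"
  using meets_requirements_stage[of c] by (simp add: meets_requirements_def admissible_extension_def)

lemma countable_graph_inter_M: "countable ({x. (x, F a x) \<in> graph_basis} \<inter> M b)"
proof -
  let ?S = "earlier a \<union> stage a \<union> (earlier b \<union> stage b)"
  have in_S: "(x, F a x) \<in> ?S" if x: "(x, F a x) \<in> graph_basis" "x \<in> M b" for x
  proof (rule ccontr)
    assume "(x, F a x) \<notin> ?S"
    then have outside: "(x, F a x) \<notin> earlier a \<union> stage a" "(x, F a x) \<notin> earlier b \<union> stage b"
      by simp_all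
    obtain c where c: "(x, F a x) \<in> stage c"
      using x(1) unfolding graph_basis_def by blast
    have "a \<sqsubset> c" "b \<sqsubset> c"
      using later_stage[OF c outside(1)] later_stage[OF c outside(2)] .
    then have "x \<in> M_before c"
      using x(2) unfolding M_before_def by blast
    moreover have "\<forall>b'. b' \<sqsubset> c \<and> F a x = F b' x \<longrightarrow> x \<notin> M_before c"
      using admissible_stage[OF c] unfolding admissible_def by simp
    ultimately show False
      using \<open>a \<sqsubset> c\<close> by blast
  qed
  have "{x. (x, F a x) \<in> graph_basis} \<inter> M b \<subseteq> fst ` ?S"
  proof
    fix x assume "x \<in> {x. (x, F a x) \<in> graph_basis} \<inter> M b"
    then have "(x, F a x) \<in> ?S"
      by (intro in_S) auto
    then show "x \<in> fst ` ?S"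
      by (rule rev_image_eqI) simp
  qed
  then show ?thesis
    by (rule countable_subset) (intro countable_image countable_Un countable_up_to)
qed

lemma countable_graph_inter_N: "countable ({x. (x, G a x) \<in> graph_basis} \<inter> N b)"
proof -
  let ?S = "earlier a \<union> stage a \<union> (earlier b \<union> stage b)"
  have in_S: "(x, G a x) \<in> ?S" if x: "(x, G a x) \<in> graph_basis" "x \<in> N b" for x
  proof (rule ccontr)
    assume "(x, G a x) \<notin> ?S"
    then have outside: "(x, G a x) \<notin> earlier a \<union> stage a" "(x, G a x) \<notin> earlier b \<union> stage b"
      by simp_all
    obtain c where c: "(x, G a x) \<in> stage c"
      using x(1) unfolding graph_basis_def by blast
    have "a \<sqsubset> c" "b \<sqsubset> c"
      using later_stage[OF c outside(1)] later_stage[OF c outside(2)] .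
    then have "x \<in> N_before c"
      using x(2) unfolding N_before_def by blast
    moreover have "\<forall>b'. b' \<sqsubset> c \<and> G a x = G b' x \<longrightarrow> x \<notin> N_before c"
      using admissible_stage[OF c] unfolding admissible_def by simp
    ultimately show False
      using \<open>a \<sqsubset> c\<close> by blast
  qed
  have "{x. (x, G a x) \<in> graph_basis} \<inter> N b \<subseteq> fst ` ?S"
  proof
    fix x assume "x \<in> {x. (x, G a x) \<in> graph_basis} \<inter> N b"
    then have "(x, G a x) \<in> ?S"
      by (intro in_S) auto
    then show "x \<in> fst ` ?S"
      by (rule rev_image_eqI) simp
  qed
  then show ?thesis
    by (rule countable_subset) (intro countable_image countable_Un countable_up_to)
qed

lemma graph_point_in_U:
  assumes "\<not> meager (U a)"
  obtains x where "x \<in> U a" "x \<notin> M a" "(x, F a x) \<in> graph_basis"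
proof -
  have "\<exists>x\<in>U a - M a. (x, F a x) \<in> stage a"
    using meets_requirements_stage[of a] assms by (simp add: meets_requirements_def)
  then obtain x where "x \<in> U a" "x \<notin> M a" "(x, F a x) \<in> stage a"
    by blast
  then show thesis
    by (intro that) (auto simp: graph_basis_def)
qed

lemma graph_point_in_K:
  assumes "K a \<notin> null_sets lebesgue"
  obtains x where "x \<in> K a" "x \<notin> N a" "(x, G a x) \<in> graph_basis"
proof -
  have "\<exists>x\<in>K a - N a. (x, G a x) \<in> stage a"
    using meets_requirements_stage[of a] assms by (simp add: meets_requirements_def)
  then obtain x where "x \<in> K a" "x \<notin> N a" "(x, G a x) \<in> stage a"
    by blast
  then show thesis
    by (intro that) (auto simp: graph_basis_def)
qed

end

locale complete_graph_basis_construction = graph_basis_construction +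
  assumes CH: CH
    and enumerates_luzin_tasks: "\<And>f M0 U0. strict_mono f \<Longrightarrow> continuous_on UNIV f \<Longrightarrow>
      meager M0 \<Longrightarrow> open U0 \<Longrightarrow> \<exists>a. F a = f \<and> M0 \<subseteq> M a \<and> U a = U0"
    and enumerates_sierpinski_tasks: "\<And>g N0 K0. (\<forall>x y. x < y \<longrightarrow> g y < g x) \<Longrightarrow>
      continuous_on UNIV g \<Longrightarrow> N0 \<in> null_sets lebesgue \<Longrightarrow> fsigma K0 \<Longrightarrow>
      \<exists>a. G a = g \<and> N0 \<subseteq> N a \<and> K a = K0"
    and surj_v: "surj v"
begin

lemma hamel_basis_graph_basis: "hamel_basis graph_basis"
proof -
  have "w \<in> Q.span graph_basis" for w
  proof -
    obtain a where "w = v a"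
      using surjD[OF surj_v] by blast
    then show ?thesis
      using v_in_span_graph_basis by simp
  qed
  then show ?thesis
    unfolding hamel_basis_iff using independent_graph_basis by auto
qed

lemma uncountable_imp_continuum: "\<not> countable (X :: real set) \<Longrightarrow> X \<approx> (UNIV :: real set)"
  using CH unfolding CH_def by blast

lemma strong_luzin_graph:
  assumes "strict_mono f" "continuous_on UNIV f"
  shows "strong_luzin {x. (x, f x) \<in> graph_basis}" (is "strong_luzin ?L")
proof -
  obtain a where "F a = f"
    using enumerates_luzin_tasks[OF assms meager_M open_empty] by blast
  have meager_part: "countable (?L \<inter> M0)" if "meager M0" for M0
  proof -
    obtain b where "M0 \<subseteq> M b"
      using enumerates_luzin_tasks[OF assms \<open>meager M0\<close> open_empty] by blast
    then have "?L \<inter> M0 \<subseteq> {x. (x, F a x) \<in> graph_basis} \<inter> M b"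
      using \<open>F a = f\<close> by blast
    then show ?thesis
      using countable_graph_inter_M by (rule countable_subset)
  qed
  have nonmeager_part: "\<not> countable (?L \<inter> B)" if B: "B \<in> sets borel" "\<not> meager B" for B
  proof
    assume "countable (?L \<inter> B)"
    obtain U0 M0 where U0: "open U0" "U0 \<noteq> {}" and "meager M0" "U0 - M0 \<subseteq> B"
      using nonmeager_borel_contains_open_minus_meager[OF B] .
    have "meager (M0 \<union> (?L \<inter> B))"
      using \<open>meager M0\<close> meager_countable[OF \<open>countable (?L \<inter> B)\<close>] by (rule meager_Un)
    then obtain c where c: "F c = f" "M0 \<union> (?L \<inter> B) \<subseteq> M c" "U c = U0"
      using enumerates_luzin_tasks[OF assms _ \<open>open U0\<close>] by blast
    then have "\<not> meager (U c)"
      using open_nonempty_not_meager[OF U0] by simp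
    then obtain x where "x \<in> U c" "x \<notin> M c" "(x, F c x) \<in> graph_basis"
      by (rule graph_point_in_U)
    with c \<open>U0 - M0 \<subseteq> B\<close> show False
      by auto
  qed
  have "\<not> countable ?L"
    using nonmeager_part[of UNIV] open_nonempty_not_meager[of UNIV] by simp
  then show ?thesis
    unfolding strong_luzin_def
    using uncountable_imp_continuum meager_part nonmeager_part by simp
qed

lemma strong_sierpinski_graph:
  assumes "\<forall>x y. x < y \<longrightarrow> g y < g x" "continuous_on UNIV g"
  shows "strong_sierpinski {x. (x, g x) \<in> graph_basis}" (is "strong_sierpinski ?S")
proof -
  obtain a where "G a = g"
    using enumerates_sierpinski_tasks[OF assms null_N fsigma_UNIV] by blast
  have null_part: "countable (?S \<inter> N0)" if "N0 \<in> null_sets lebesgue" for N0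
  proof -
    obtain b where "N0 \<subseteq> N b"
      using enumerates_sierpinski_tasks[OF assms \<open>N0 \<in> null_sets lebesgue\<close> fsigma_UNIV] by blast
    then have "?S \<inter> N0 \<subseteq> {x. (x, G a x) \<in> graph_basis} \<inter> N b"
      using \<open>G a = g\<close> by blast
    then show ?thesis
      using countable_graph_inter_N by (rule countable_subset)
  qed
  have positive_part: "\<not> countable (?S \<inter> B)" if B: "B \<in> sets borel" "emeasure lebesgue B > 0" for B
  proof
    assume "countable (?S \<inter> B)"
    obtain C where C: "fsigma C" "C \<notin> null_sets lebesgue" "C \<subseteq> B"
      using positive_measure_contains_fsigma[of B] B by auto
    have "?S \<inter> B \<in> null_sets lebesgue"
      using \<open>countable (?S \<inter> B)\<close> by (simp add: countable_imp_null_set_lborel null_sets_completionI)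
    then obtain c where c: "G c = g" "?S \<inter> B \<subseteq> N c" "K c = C"
      using enumerates_sierpinski_tasks[OF assms _ \<open>fsigma C\<close>] by blast
    then have "K c \<notin> null_sets lebesgue"
      using C(2) by simp
    then obtain x where "x \<in> K c" "x \<notin> N c" "(x, G c x) \<in> graph_basis"
      by (rule graph_point_in_K)
    with c \<open>C \<subseteq> B\<close> show False
      by auto
  qed
  have "\<not> countable ?S"
    using positive_part[of UNIV] by simp
  then show ?thesis
    unfolding strong_sierpinski_def
    using uncountable_imp_continuum null_part positive_part by simp
qed

end

lemma exists_luzin_enumeration:
  obtains F :: "real \<Rightarrow> real \<Rightarrow> real" and M U :: "real \<Rightarrow> real set"
  where "\<And>t. strict_mono (F t)" "\<And>t. meager (M t)"
    "\<And>f M0 U0. strict_mono f \<Longrightarrow> continuous_on UNIV f \<Longrightarrow> meager M0 \<Longrightarrow> open U0 \<Longrightarrow>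
      \<exists>t. F t = f \<and> M0 \<subseteq> M t \<and> U t = U0"
proof -
  let ?A = "{f :: real \<Rightarrow> real. strict_mono f \<and> continuous_on UNIV f}"
  let ?B = "{M :: real set. meager M \<and> fsigma M}"
  let ?C = "{U :: real set. open U}"
  have "id \<in> ?A" "{} \<in> ?B" "{} \<in> ?C"
    by (auto simp: strict_mono_def meager_def intro: fsigma.intros[of "\<lambda>_. {}", simplified])
  then have nonempty: "?A \<noteq> {}" "?B \<noteq> {}" "?C \<noteq> {}"
    by blast+
  have "?A \<lesssim> (UNIV :: real set)" "?B \<lesssim> (UNIV :: real set)" "?C \<lesssim> (UNIV :: real set)"
    using lepoll_trans[OF subset_imp_lepoll continuous_lepoll_real, of ?A]
      lepoll_trans[OF subset_imp_lepoll fsigma_lepoll_real, of ?B] open_lepoll_real by auto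
  then obtain F :: "real \<Rightarrow> real \<Rightarrow> real" and M U :: "real \<Rightarrow> real set" where "\<And>t. F t \<in> ?A" "\<And>t. M t \<in> ?B" "\<And>t. U t \<in> ?C"
    and all: "\<And>f M0 U0. f \<in> ?A \<Longrightarrow> M0 \<in> ?B \<Longrightarrow> U0 \<in> ?C \<Longrightarrow> \<exists>t. F t = f \<and> M t = M0 \<and> U t = U0"
    by (rule enumerate_Times3[OF nonempty]) blast
  show thesis
  proof (rule that[of F M U])
    fix f :: "real \<Rightarrow> real" and M0 U0 :: "real set"
    assume "strict_mono f" "continuous_on UNIV f" "meager M0" "open U0"
    moreover obtain C where "fsigma C" "meager C" "M0 \<subseteq> C"
      using meager_subset_meager_fsigma[OF \<open>meager M0\<close>] by blast
    ultimately obtain t where "F t = f" "M t = C" "U t = U0"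
      using all[of f C U0] by auto
    with \<open>M0 \<subseteq> C\<close> show "\<exists>t. F t = f \<and> M0 \<subseteq> M t \<and> U t = U0"
      by blast
  qed (use \<open>\<And>t. F t \<in> ?A\<close> \<open>\<And>t. M t \<in> ?B\<close> in auto)
qed

lemma exists_sierpinski_enumeration:
  obtains G :: "real \<Rightarrow> real \<Rightarrow> real" and N K :: "real \<Rightarrow> real set"
  where "\<And>t x y. x < y \<Longrightarrow> G t y < G t x" "\<And>t. N t \<in> null_sets lebesgue"
    "\<And>g N0 K0. (\<forall>x y. x < y \<longrightarrow> g y < g x) \<Longrightarrow> continuous_on UNIV g \<Longrightarrow>
      N0 \<in> null_sets lebesgue \<Longrightarrow> fsigma K0 \<Longrightarrow> \<exists>t. G t = g \<and> N0 \<subseteq> N t \<and> K t = K0"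
proof -
  let ?A = "{g :: real \<Rightarrow> real. (\<forall>x y. x < y \<longrightarrow> g y < g x) \<and> continuous_on UNIV g}"
  let ?B = "{N :: real set. N \<in> null_sets lebesgue \<and> gdelta N}"
  let ?C = "{K :: real set. fsigma K}"
  have "uminus \<in> ?A" "{} \<in> ?B" "{} \<in> ?C"
    by (auto intro: continuous_intros fsigma.intros[of "\<lambda>_. {}", simplified]
        gdelta.intros[of "\<lambda>_. {}", simplified])
  then have nonempty: "?A \<noteq> {}" "?B \<noteq> {}" "?C \<noteq> {}"
    by blast+
  have "?A \<lesssim> (UNIV :: real set)" "?B \<lesssim> (UNIV :: real set)" "?C \<lesssim> (UNIV :: real set)"
    using lepoll_trans[OF subset_imp_lepoll continuous_lepoll_real, of ?A]
      lepoll_trans[OF subset_imp_lepoll gdelta_lepoll_real, of ?B] fsigma_lepoll_real by auto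
  then obtain G :: "real \<Rightarrow> real \<Rightarrow> real" and N K :: "real \<Rightarrow> real set" where "\<And>t. G t \<in> ?A" "\<And>t. N t \<in> ?B" "\<And>t. K t \<in> ?C"
    and all: "\<And>g N0 K0. g \<in> ?A \<Longrightarrow> N0 \<in> ?B \<Longrightarrow> K0 \<in> ?C \<Longrightarrow> \<exists>t. G t = g \<and> N t = N0 \<and> K t = K0"
    by (rule enumerate_Times3[OF nonempty]) blast
  show thesis
  proof (rule that[of G N K])
    fix g :: "real \<Rightarrow> real" and N0 K0 :: "real set"
    assume "\<forall>x y. x < y \<longrightarrow> g y < g x" "continuous_on UNIV g" "N0 \<in> null_sets lebesgue" "fsigma K0"
    moreover obtain C where "gdelta C" "C \<in> null_sets lebesgue" "N0 \<subseteq> C"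
      using null_subset_null_gdelta[OF \<open>N0 \<in> null_sets lebesgue\<close>] by blast
    ultimately obtain t where "G t = g" "N t = C" "K t = K0"
      using all[of g C K0] by auto
    with \<open>N0 \<subseteq> C\<close> show "\<exists>t. G t = g \<and> N0 \<subseteq> N t \<and> K t = K0"
      by blast
  qed (use \<open>\<And>t. G t \<in> ?A\<close> \<open>\<And>t. N t \<in> ?B\<close> in auto)
qed

lemma exists_surj_real_plane: "\<exists>v :: real \<Rightarrow> real \<times> real. surj v"
  using lepoll_imp_image_eq[of "UNIV :: (real \<times> real) set" "UNIV :: real set"]
    Times_lepoll_real[of "UNIV :: real set" "UNIV :: real set"] by simp

lemma CH_imp_complete_graph_basis_construction:
  assumes CH
  shows "\<exists>(less :: real \<Rightarrow> real \<Rightarrow> bool) F G M N U K v.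
    complete_graph_basis_construction less F G M N U K v"
proof -
  obtain less :: "real \<Rightarrow> real \<Rightarrow> bool" where less: "wf {(b, a). less b a}"
    "\<And>a b c. less a b \<Longrightarrow> less b c \<Longrightarrow> less a c" "\<And>a b. a \<noteq> b \<Longrightarrow> less a b \<or> less b a"
    "\<And>a. countable {b. less b a}"
    using CH_imp_countable_initial_segments[OF assms] by blast
  obtain F :: "real \<Rightarrow> real \<Rightarrow> real" and M U :: "real \<Rightarrow> real set" where FMU: "\<And>t. strict_mono (F t)" "\<And>t. meager (M t)"
    "\<And>f M0 U0. strict_mono f \<Longrightarrow> continuous_on UNIV f \<Longrightarrow> meager M0 \<Longrightarrow> open U0 \<Longrightarrow>
      \<exists>t. F t = f \<and> M0 \<subseteq> M t \<and> U t = U0"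
    by (rule exists_luzin_enumeration) blast
  obtain G :: "real \<Rightarrow> real \<Rightarrow> real" and N K :: "real \<Rightarrow> real set" where GNK: "\<And>t x y. x < y \<Longrightarrow> G t y < G t x" "\<And>t. N t \<in> null_sets lebesgue"
    "\<And>g N0 K0. (\<forall>x y. x < y \<longrightarrow> g y < g x) \<Longrightarrow> continuous_on UNIV g \<Longrightarrow>
      N0 \<in> null_sets lebesgue \<Longrightarrow> fsigma K0 \<Longrightarrow> \<exists>t. G t = g \<and> N0 \<subseteq> N t \<and> K t = K0"
    by (rule exists_sierpinski_enumeration) blast
  obtain v :: "real \<Rightarrow> real \<times> real" where "surj v"
    using exists_surj_real_plane by blast
  have "complete_graph_basis_construction less F G M N U K v"
    by unfold_locales (use assms less FMU GNK \<open>surj v\<close> in \<open>auto\<close>)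
  then show ?thesis
    by blast
qed

theorem mainTheorem9:
  assumes "CH"
  shows "\<exists>A :: (real \<times> real) set. hamel_basis A
     \<and> (\<forall>f :: real \<Rightarrow> real. strict_mono f \<and> continuous_on UNIV f
          \<longrightarrow> strong_luzin {x. (x, f x) \<in> A})
     \<and> (\<forall>g :: real \<Rightarrow> real. (\<forall>x y. x < y \<longrightarrow> g y < g x) \<and> locally_abs_continuous g
          \<longrightarrow> strong_sierpinski {x. (x, g x) \<in> A})"
proof -
  obtain less :: "real \<Rightarrow> real \<Rightarrow> bool" and F G M N U K v
    where "complete_graph_basis_construction less F G M N U K v"
    using CH_imp_complete_graph_basis_construction[OF assms] by blast
  then interpret complete_graph_basis_construction less F G M N U K v .
  show ?thesis
    using hamel_basis_graph_basis strong_luzin_graph strong_sierpinski_graph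
      locally_abs_continuous_imp_continuous by blast
qed

end
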